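(* For $n,m\in\mathbb{N}_0$, $$\int_0^{\pi/2}x^n\sin^{2m}(x)\,dx=\frac{1}{4^m}\Big(\frac{\pi}{2}\Big)^n\Bigg(\frac{\pi\binom{2m}{m}}{2(n+1)}-n!\sum_{k=1}^{\infty}\binom{2m}{m+k}\bigg(\sum_{j=1}^{\lfloor (n+1)/2\rfloor}\frac{(-1)^j}{\pi^{2j-1}k^{2j}(n+1-2j)!}-\delta_{\lfloor \frac{n+1}{2}\rfloor,\frac{n+1}{2}}\frac{(-1)^k(-1)^{\lfloor (n+1)/2\rfloor}}{\pi^n k^{n+1}}\bigg)\Bigg).$$
   Context: $\delta_{a,b}$ is the Kronecker delta, so $\delta_{\lfloor \frac{n+1}{2}\rfloor,\frac{n+1}{2}}$ is $1$ if $n$ is odd and $0$ if $n$ is even. $\binom{2m}{m+k}=0$ for integers $k>m$. An empty sum is $0$. *)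

theory Defs
  imports "HOL-Analysis.Analysis"
begin

end

theory Submission
  imports Defs
begin

text \<open>
  Expanding \<open>(2i sin x)^(2m) = (e^(ix) - e^(-ix))^(2m)\<close> binomially gives
  \<open>4^m sin^(2m) x = C(2m,m) + 2 \<Sum>_(k=1..m) (-1)^k C(2m,m+k) cos (2kx)\<close>, so the integral
  reduces to the moments of \<open>x^n cos (2kx)\<close> on \<open>[0, \<pi>/2]\<close>. Integrating by parts \<open>n\<close> times
  gives the antiderivative \<open>\<Sum>_(r\<le>n) (-1)^r n!/(n-r)! x^(n-r) sin (bx - r\<pi>/2) / b^(r+1)\<close>
  with \<open>b = 2k\<close>. At \<open>x = \<pi>/2\<close> the terms with even \<open>r\<close> vanish and those with \<open>r = 2j - 1\<close>
  give the sum over \<open>j\<close>; at \<open>x = 0\<close> only the term \<open>r = n\<close> survives, and only for odd \<open>n\<close>.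
  The series in the statement is a finite sum, since \<open>C(2m,m+k) = 0\<close> for \<open>k > m\<close>.
\<close>

lemma sin_of_nat_mult_pi_half:
  "sin (real r * pi / 2) = (if even r then 0 else (-1) ^ (r div 2))"
proof (cases "even r")
  case True
  then obtain q where "r = 2 * q" by blast
  then have "real r * pi / 2 = real q * pi" by simp
  then show ?thesis using \<open>even r\<close> by simp
next
  case False
  then obtain q where q: "r = 2 * q + 1" using oddE by blast
  have "real r * pi / 2 = real q * pi + pi / 2" using q by (simp add: field_simps)
  then have "sin (real r * pi / 2) = (-1) ^ q" by (simp only: sin_add) simp
  then show ?thesis using q by simp
qed

lemma sum_sin_of_nat_mult_pi_half:
  fixes g :: "nat \<Rightarrow> real"
  shows "(\<Sum>r\<le>n. g r * sin (real r * pi / 2)) = - (\<Sum>j=1..(n+1) div 2. g (2*j-1) * (-1) ^ j)"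
proof (induction n)
  case 0
  then show ?case by simp
next
  case (Suc n)
  show ?case
  proof (cases "even n")
    case True
    then obtain q where q: "n = 2 * q" by blast
    have "(\<Sum>j=1..Suc q. g (2*j-1) * (-1) ^ j) =
        (\<Sum>j=1..q. g (2*j-1) * (-1) ^ j) + g (Suc n) * (-1) ^ Suc q"
      using q by (simp add: sum.atLeast1_atMost_eq)
    then show ?thesis using Suc.IH q by (simp add: sin_of_nat_mult_pi_half)
  next
    case False
    then have "(Suc n + 1) div 2 = (n + 1) div 2" by presburger
    then show ?thesis using Suc.IH False by (simp add: sin_of_nat_mult_pi_half)
  qed
qed

lemma minus_cis_power_mult_cis_power:
  assumes "l \<le> n"
  shows "(- cis (-x)) ^ l * cis x ^ (n - l) = (-1) ^ l * cis ((real n - 2 * real l) * x)"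
proof -
  have "real l * (-x) + real (n - l) * x = (real n - 2 * real l) * x"
    using assms by (simp add: of_nat_diff algebra_simps)
  then have "cis (real l * (-x)) * cis (real (n - l) * x) = cis ((real n - 2 * real l) * x)"
    by (simp only: cis_mult)
  then show ?thesis by (simp only: power_minus[of "cis (-x)"] Complex.DeMoivre mult.assoc)
qed

lemma sin_power_even_binomial:
  "(-4) ^ m * sin x ^ (2*m) =
    (\<Sum>l\<le>2*m. real (2*m choose l) * (-1) ^ l * cos ((real (2*m) - 2 * real l) * x))"
proof -
  have "cis x - cis (-x) = 2 * \<i> * complex_of_real (sin x)"
    by (simp add: complex_eq_iff)
  then have square: "(cis x - cis (-x)) ^ 2 = complex_of_real (-4 * sin x ^ 2)"
    by (simp add: power_mult_distrib)
  have "(-4 * sin x ^ 2) ^ m = (-4) ^ m * sin x ^ (2*m)"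
    by (subst power_mult_distrib) (simp add: power_mult)
  then have "complex_of_real ((-4) ^ m * sin x ^ (2*m)) = (- cis (-x) + cis x) ^ (2*m)"
    by (metis power_mult square of_real_power diff_conv_add_uminus add.commute)
  also have "\<dots> = (\<Sum>l\<le>2*m. of_nat (2*m choose l) * ((- cis (-x)) ^ l * cis x ^ (2*m-l)))"
    by (simp only: binomial_ring mult.assoc)
  also have "\<dots> = (\<Sum>l\<le>2*m. complex_of_real (real (2*m choose l) * (-1) ^ l) *
                                cis ((real (2*m) - 2 * real l) * x))"
    by (rule sum.cong) (simp_all add: minus_cis_power_mult_cis_power)
  finally have "Re (complex_of_real ((-4) ^ m * sin x ^ (2*m))) =
      Re (\<Sum>l\<le>2*m. complex_of_real (real (2*m choose l) * (-1) ^ l) *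
                       cis ((real (2*m) - 2 * real l) * x))"
    by (rule arg_cong)
  then show ?thesis by (simp add: Re_sum)
qed

lemma sin_power_even_cos_expansion:
  "4 ^ m * sin x ^ (2*m) =
    real (2*m choose m) + 2 * (\<Sum>k=1..m. (-1) ^ k * real (2*m choose (m+k)) * cos (2 * real k * x))"
proof -
  define f where "f l = real (2*m choose l) * (-1) ^ l * cos ((real (2*m) - 2 * real l) * x)" for l
  define c where "c k = (-1) ^ k * real (2*m choose (m+k)) * cos (2 * real k * x)" for k
  have upper: "f (m + k) = (-1) ^ m * c k" for k
  proof -
    have "(real (2*m) - 2 * real (m + k)) * x = - (2 * real k * x)" by (simp add: algebra_simps)
    then show ?thesis by (simp add: f_def c_def power_add)
  qed
  have lower: "f (m - k) = (-1) ^ m * c k" if "k \<le> m" for k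
  proof -
    have binom: "2*m choose (m - k) = 2*m choose (m + k)"
      using binomial_symmetric[of "m - k" "2*m"] that by (simp add: mult_2)
    have sign: "(-1::real) ^ (m - k) = (-1) ^ (m + k)"
      using that by (metis add_diff_inverse_nat le_add_diff_inverse2 minus_one_power_iff even_add not_less)
    have arg: "(real (2*m) - 2 * real (m - k)) * x = 2 * real k * x"
      using that by (simp add: of_nat_diff algebra_simps)
    show ?thesis unfolding f_def c_def binom sign arg by (simp add: power_add)
  qed
  have "{..2*m} = insert m ({..<m} \<union> {1+m..m+m})" by auto
  then have decompose: "(\<Sum>l\<le>2*m. f l) = (\<Sum>l<m. f l) + f m + (\<Sum>l=1+m..m+m. f l)"
    by (simp, subst sum.union_disjoint) auto
  have "(\<Sum>l<m. f l) = (\<Sum>k=1..m. f (m - k))"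
    by (simp add: sum.atLeast1_atMost_eq sum.nat_diff_reindex)
  also have "\<dots> = (\<Sum>k=1..m. (-1) ^ m * c k)"
    by (rule sum.cong) (simp_all add: lower)
  finally have low: "(\<Sum>l<m. f l) = (-1) ^ m * (\<Sum>k=1..m. c k)"
    by (simp add: sum_distrib_left)
  have "(\<Sum>l=1+m..m+m. f l) = (\<Sum>k=1..m. f (m + k))"
    by (simp only: sum.shift_bounds_cl_nat_ivl add.commute)
  then have up: "(\<Sum>l=1+m..m+m. f l) = (-1) ^ m * (\<Sum>k=1..m. c k)"
    by (simp add: upper sum_distrib_left)
  have "(\<Sum>l\<le>2*m. f l) = (-1) ^ m * (real (2*m choose m) + 2 * (\<Sum>k=1..m. c k))"
    unfolding decompose low up by (simp add: f_def algebra_simps)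
  moreover have "(-4::real) ^ m = (-1) ^ m * 4 ^ m" by (simp add: power_mult_distrib[symmetric])
  ultimately show ?thesis
    using sin_power_even_binomial[of m x] by (simp add: f_def c_def)
qed

text \<open>Repeated integration by parts; the shift of the phase by \<open>\<pi>/2\<close> turns the sine produced
  by each step back into a cosine.\<close>

fun cos_antideriv :: "real \<Rightarrow> nat \<Rightarrow> real \<Rightarrow> real \<Rightarrow> real" where
  "cos_antideriv b 0 \<phi> x = sin (b * x + \<phi>) / b"
| "cos_antideriv b (Suc n) \<phi> x =
    x ^ Suc n * sin (b * x + \<phi>) / b - real (Suc n) / b * cos_antideriv b n (\<phi> - pi/2) x"

lemma has_real_derivative_cos_antideriv:
  assumes "b \<noteq> 0"
  shows "(cos_antideriv b n \<phi> has_real_derivative x ^ n * cos (b * x + \<phi>)) (at x)"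
proof (induction n arbitrary: \<phi>)
  case 0
  show ?case using assms by (auto intro!: derivative_eq_intros)
next
  case (Suc n)
  have "cos ((b * x + \<phi>) - pi/2) = sin (b * x + \<phi>)"
    by (simp only: cos_diff) simp
  then have shift: "cos (b * x + (\<phi> - pi/2)) = sin (b * x + \<phi>)"
    by (simp add: add_diff_eq)
  have "x * x ^ (i - Suc 0) = x ^ i" if "0 < i" for i
    by (metis Suc_pred power_Suc that)
  then have deriv: "(cos_antideriv b (Suc n) \<phi> has_real_derivative
      real (Suc n) * x ^ n * sin (b * x + \<phi>) / b + x ^ Suc n * cos (b * x + \<phi>)
        - real (Suc n) / b * (x ^ n * cos (b * x + (\<phi> - pi/2)))) (at x)"
    unfolding cos_antideriv.simps using assms
    by (auto intro!: derivative_eq_intros Suc.IH simp: field_simps)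
  moreover have collapse:
    "real (Suc n) * x ^ n * sin (b * x + \<phi>) / b + x ^ Suc n * cos (b * x + \<phi>)
        - real (Suc n) / b * (x ^ n * cos (b * x + (\<phi> - pi/2))) = x ^ Suc n * cos (b * x + \<phi>)"
    unfolding shift by (simp add: field_simps)
  ultimately show ?case by (simp only: deriv collapse)
qed

lemma cos_antideriv_eq_sum:
  "cos_antideriv b n \<phi> x =
    (\<Sum>r\<le>n. (-1) ^ r * (fact n / fact (n - r)) * x ^ (n - r) *
      sin (b * x + \<phi> - real r * pi / 2) / b ^ (r + 1))"
proof (induction n arbitrary: \<phi>)
  case 0
  then show ?case by simp
next
  case (Suc n)
  have "(\<Sum>r\<le>Suc n. (-1) ^ r * (fact (Suc n) / fact (Suc n - r)) * x ^ (Suc n - r) *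
          sin (b * x + \<phi> - real r * pi / 2) / b ^ (r + 1))
      = x ^ Suc n * sin (b * x + \<phi>) / b +
        (\<Sum>r\<le>n. (-1) ^ Suc r * (fact (Suc n) / fact (n - r)) * x ^ (n - r) *
          sin (b * x + \<phi> - real (Suc r) * pi / 2) / b ^ (Suc r + 1))"
    by (subst sum.atMost_Suc_shift) simp
  also have "(\<Sum>r\<le>n. (-1) ^ Suc r * (fact (Suc n) / fact (n - r)) * x ^ (n - r) *
          sin (b * x + \<phi> - real (Suc r) * pi / 2) / b ^ (Suc r + 1))
      = - (real (Suc n) / b) * (\<Sum>r\<le>n. (-1) ^ r * (fact n / fact (n - r)) * x ^ (n - r) *
          sin (b * x + (\<phi> - pi/2) - real r * pi / 2) / b ^ (r + 1))"
    unfolding sum_distrib_left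
  proof (rule sum.cong)
    fix r
    have "b * x + \<phi> - real (Suc r) * pi / 2 = b * x + (\<phi> - pi/2) - real r * pi / 2"
      by (simp add: field_simps)
    then show "(-1) ^ Suc r * (fact (Suc n) / fact (n - r)) * x ^ (n - r) *
          sin (b * x + \<phi> - real (Suc r) * pi / 2) / b ^ (Suc r + 1)
        = - (real (Suc n) / b) * ((-1) ^ r * (fact n / fact (n - r)) * x ^ (n - r) *
          sin (b * x + (\<phi> - pi/2) - real r * pi / 2) / b ^ (r + 1))"
      by (simp add: field_simps del: sin_add sin_diff)
        (simp add: add_divide_distrib diff_divide_distrib)
  qed simp
  finally show ?case using Suc.IH[of "\<phi> - pi/2"] by simp
qed

lemma cos_antideriv_at_0:
  "cos_antideriv b n 0 0 = (if odd n then (-1) ^ (n div 2) * fact n / b ^ (n+1) else 0)"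
proof -
  have "{..n} = insert n {..<n}" by auto
  then have "cos_antideriv b n 0 0 = (-1) ^ n * fact n * sin (- (real n * pi / 2)) / b ^ (n+1)"
    by (simp add: cos_antideriv_eq_sum power_0_left)
  also have "\<dots> = (if odd n then (-1) ^ (n div 2) * fact n / b ^ (n+1) else 0)"
    by (cases "even n") (simp_all add: sin_of_nat_mult_pi_half)
  finally show ?thesis .
qed

lemma pi_half_power_div_two_k_power:
  fixes k n j :: nat
  assumes "k > 0" "1 \<le> j" "2 * j \<le> n + 1"
  shows "(pi/2) ^ (n + 1 - 2*j) / (2 * real k) ^ (2*j)
    = (pi/2) ^ n / (2 * pi ^ (2*j - 1) * real k ^ (2*j))"
proof -
  define a where "a = n + 1 - 2*j"
  define c where "c = 2*j - 1"
  have "n = a + c" "2*j = Suc c" using assms unfolding a_def c_def by auto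
  then show ?thesis
    using assms unfolding a_def[symmetric] c_def[symmetric]
    by (simp add: power_add power_mult_distrib power_divide field_simps)
qed

lemma cos_antideriv_at_pi_half:
  fixes k n :: nat
  assumes "k > 0"
  shows "cos_antideriv (2 * real k) n 0 (pi/2) = (-1) ^ (k+1) / 2 * (pi/2) ^ n * fact n *
    (\<Sum>j=1..(n+1) div 2. (-1) ^ j / (pi ^ (2*j-1) * real k ^ (2*j) * fact (n+1-2*j)))"
proof -
  define g where "g r = (-1) ^ r * (fact n / fact (n - r)) * (pi/2) ^ (n - r) / (2 * real k) ^ (r+1)" for r
  have "cos_antideriv (2 * real k) n 0 (pi/2) = (\<Sum>r\<le>n. g r * ((-1) ^ (k+1) * sin (real r * pi / 2)))"
    unfolding cos_antideriv_eq_sum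
  proof (rule sum.cong)
    fix r
    have "2 * real k * (pi/2) + 0 - real r * pi / 2 = real k * pi - real r * pi / 2" by simp
    then show "(-1) ^ r * (fact n / fact (n - r)) * (pi/2) ^ (n - r) *
        sin (2 * real k * (pi/2) + 0 - real r * pi / 2) / (2 * real k) ^ (r+1)
      = g r * ((-1) ^ (k+1) * sin (real r * pi / 2))"
      by (simp add: g_def sin_diff)
  qed simp
  also have "\<dots> = (-1) ^ (k+1) * (\<Sum>r\<le>n. g r * sin (real r * pi / 2))"
    by (simp add: sum_distrib_left mult_ac)
  also have "\<dots> = (-1) ^ k * (\<Sum>j=1..(n+1) div 2. g (2*j-1) * (-1) ^ j)"
    by (simp only: sum_sin_of_nat_mult_pi_half) simp
  also have "(\<Sum>j=1..(n+1) div 2. g (2*j-1) * (-1) ^ j) =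
      (\<Sum>j=1..(n+1) div 2. (- ((pi/2) ^ n) * fact n / 2) *
         ((-1) ^ j / (pi ^ (2*j-1) * real k ^ (2*j) * fact (n+1-2*j))))"
  proof (rule sum.cong)
    fix j assume "j \<in> {1..(n+1) div 2}"
    then have j: "1 \<le> j" "2 * j \<le> n + 1" by auto
    then have "n - (2*j-1) = n + 1 - 2*j" "2*j - 1 + 1 = 2*j" "odd (2*j - 1)" by auto
    then have "g (2*j-1) = - (fact n / fact (n+1-2*j)) * ((pi/2) ^ (n+1-2*j) / (2 * real k) ^ (2*j))"
      by (simp add: g_def)
    then show "g (2*j-1) * (-1) ^ j = (- ((pi/2) ^ n) * fact n / 2) *
         ((-1) ^ j / (pi ^ (2*j-1) * real k ^ (2*j) * fact (n+1-2*j)))"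
      unfolding pi_half_power_div_two_k_power[OF assms j] by (simp add: mult_ac)
  qed simp
  finally show ?thesis by (simp add: sum_distrib_left field_simps)
qed

text \<open>The bracket of the statement, with the Kronecker delta written as \<open>odd n\<close>.\<close>

definition cos_moment_bracket :: "nat \<Rightarrow> nat \<Rightarrow> real" where
  "cos_moment_bracket n k =
    (\<Sum>j=1..(n+1) div 2. (-1) ^ j / (pi ^ (2*j-1) * real k ^ (2*j) * fact (n+1-2*j)))
    - (if odd n then (-1) ^ k * (-1) ^ ((n+1) div 2) / (pi ^ n * real k ^ (n+1)) else 0)"

lemma has_integral_power_mult_cos:
  fixes k n :: nat
  assumes "k > 0"
  shows "((\<lambda>x. x ^ n * cos (2 * real k * x)) has_integral
    ((-1) ^ (k+1) / 2 * (pi/2) ^ n * fact n * cos_moment_bracket n k)) {0..pi/2}"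
proof -
  have "(cos_antideriv (2 * real k) n 0 has_real_derivative x ^ n * cos (2 * real k * x)) (at x)" for x
    using has_real_derivative_cos_antideriv[of "2 * real k" n 0 x] assms by simp
  then have "((\<lambda>x. x ^ n * cos (2 * real k * x)) has_integral
      (cos_antideriv (2 * real k) n 0 (pi/2) - cos_antideriv (2 * real k) n 0 0)) {0..pi/2}"
    by (intro fundamental_theorem_of_calculus)
      (auto intro: has_field_derivative_at_within
        simp: has_real_derivative_iff_has_vector_derivative[symmetric])
  moreover have "(-1) ^ (k+1) / 2 * (pi/2) ^ n * fact n *
      (if odd n then (-1) ^ k * (-1) ^ ((n+1) div 2) / (pi ^ n * real k ^ (n+1)) else 0)
    = (if odd n then (-1) ^ (n div 2) * fact n / (2 * real k) ^ (n+1) else 0)"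
  proof (cases "even n")
    case False
    then have "(n + 1) div 2 = Suc (n div 2)" by presburger
    then show ?thesis using False assms by (simp add: power_mult_distrib power_divide field_simps)
  qed simp
  ultimately show ?thesis
    unfolding cos_antideriv_at_0 cos_antideriv_at_pi_half[OF assms] cos_moment_bracket_def
    by (simp add: right_diff_distrib)
qed

lemma has_integral_power:
  fixes b :: real
  assumes "0 \<le> b"
  shows "((\<lambda>x. x ^ n) has_integral (b ^ (n+1) / real (n+1))) {0..b}"
proof -
  have "((\<lambda>x. x ^ (n+1) / real (n+1)) has_real_derivative x ^ n) (at x within {0..b})" for x :: real
    using DERIV_cdivide[OF DERIV_pow[of "n+1" x "{0..b}"], of "real (n+1)"] by simp
  then show ?thesis
    using fundamental_theorem_of_calculus[of 0 b "\<lambda>x. x ^ (n+1) / real (n+1)" "\<lambda>x. x ^ n"] assms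
    by (simp add: has_real_derivative_iff_has_vector_derivative[symmetric])
qed

lemma has_integral_power_mult_sin_power_even:
  fixes n m :: nat
  shows "((\<lambda>x. x ^ n * sin x ^ (2*m)) has_integral
    1 / 4 ^ m * (pi/2) ^ n * (pi * real (2*m choose m) / (2 * real (n+1))
      - fact n * (\<Sum>k=1..m. real (2*m choose (m+k)) * cos_moment_bracket n k))) {0..pi/2}"
proof -
  define C where "C k = real (2*m choose (m+k))" for k
  have integrand: "x ^ n * sin x ^ (2*m) = 1 / 4 ^ m * (C 0 * x ^ n +
      (\<Sum>k=1..m. (2 * (-1) ^ k * C k) * (x ^ n * cos (2 * real k * x))))" for x
  proof -
    have "x ^ n * sin x ^ (2*m) = 1 / 4 ^ m * (x ^ n * (4 ^ m * sin x ^ (2*m)))" by simp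
    then show ?thesis
      unfolding sin_power_even_cos_expansion C_def by (simp add: sum_distrib_left algebra_simps)
  qed
  have termwise:
    "(2 * (-1) ^ k * C k) * ((-1) ^ (k+1) / 2 * (pi/2) ^ n * fact n * cos_moment_bracket n k)
      = - ((pi/2) ^ n * fact n * (C k * cos_moment_bracket n k))" for k
    by (simp add: power_add flip: power_mult_distrib)
  have moments: "((\<lambda>x. x ^ n * sin x ^ (2*m)) has_integral
      1 / 4 ^ m * (C 0 * ((pi/2) ^ (n+1) / real (n+1)) +
      (\<Sum>k=1..m. (2 * (-1) ^ k * C k) *
        ((-1) ^ (k+1) / 2 * (pi/2) ^ n * fact n * cos_moment_bracket n k)))) {0..pi/2}"
    unfolding integrand
    by (intro has_integral_mult_right has_integral_add has_integral_sum
        has_integral_power has_integral_power_mult_cos) auto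
  have sum_moments: "(\<Sum>k=1..m. (2 * (-1) ^ k * C k) *
        ((-1) ^ (k+1) / 2 * (pi/2) ^ n * fact n * cos_moment_bracket n k))
      = - ((pi/2) ^ n * fact n * (\<Sum>k=1..m. C k * cos_moment_bracket n k))"
    by (simp only: termwise sum_negf sum_distrib_left)
  show ?thesis
    using moments unfolding sum_moments
    by (rule has_integral_eq_rhs) (simp add: C_def divide_simps, simp add: algebra_simps)
qed

theorem theorem2:
  fixes n m :: nat
  shows "integral {0..pi/2} (\<lambda>x. x ^ n * (sin x) ^ (2*m)) =
    1 / 4 ^ m * (pi/2) ^ n *
    (pi * real ((2*m) choose m) / (2 * real (n+1))
     - fact n * (\<Sum>i. let k = Suc i in
          real ((2*m) choose (m+k)) *
          ((\<Sum>j=1..(n+1) div 2.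
              (-1) ^ j / (pi ^ (2*j-1) * real k ^ (2*j) * fact (n+1-2*j)))
           - (if real ((n+1) div 2) = real (n+1) / 2 then 1 else 0) *
             ((-1) ^ k * (-1) ^ ((n+1) div 2) / (pi ^ n * real k ^ (n+1))))))"
proof -
  have "real ((n+1) div 2) = real (n+1) / 2 \<longleftrightarrow> odd n"
    by (cases "even n") (auto elim!: evenE oddE)
  then have "(\<lambda>i. let k = Suc i in
          real ((2*m) choose (m+k)) *
          ((\<Sum>j=1..(n+1) div 2.
              (-1) ^ j / (pi ^ (2*j-1) * real k ^ (2*j) * fact (n+1-2*j)))
           - (if real ((n+1) div 2) = real (n+1) / 2 then 1 else 0) *
             ((-1) ^ k * (-1) ^ ((n+1) div 2) / (pi ^ n * real k ^ (n+1)))))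
      = (\<lambda>i. real (2*m choose (m + Suc i)) * cos_moment_bracket n (Suc i))"
    by (simp add: cos_moment_bracket_def)
  moreover have "(\<Sum>i. real (2*m choose (m + Suc i)) * cos_moment_bracket n (Suc i)) =
      (\<Sum>k=1..m. real (2*m choose (m+k)) * cos_moment_bracket n k)"
    by (subst suminf_finite[of "{..<m}"]) (auto simp: sum.atLeast1_atMost_eq)
  ultimately show ?thesis
    using integral_unique[OF has_integral_power_mult_sin_power_even] by simp
qed

end
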